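(* Let $q$ be even, $P_{22}\in\mathbb{S}_q$ with $P_{22}\succ0$, $Q_{22}\in\mathbb{S}_q$ with $Q_{22}\succ0$, $\Theta_2\in\mathbb{A}_q$ nonsingular, and suppose the complex Hermitian matrix $P_{22}+i\Theta_2$ is positive semi-definite. Let $\Xi\in\mathbb{A}_q$, and set $N:=Q_{22}^{-1}\Xi$, $S:=\Theta_2P_{22}^{-1}$. Let $D\in\mathbb{R}^{p\times m_1}$ with $DD^{T}=I_p$ and $\Delta:=DJ_1D^{T}$. If $\rho(N)<1$, then the three linear operators $$X\mapsto X-NXS\ \text{on}\ \mathbb{R}^{q\times q},\qquad X\mapsto X-NXJ_2\ \text{on}\ \mathbb{R}^{q\times m_2},\qquad X\mapsto X-NX\Delta\ \text{on}\ \mathbb{R}^{q\times p}$$ are all invertible.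
   Context: $\mathbb{S}_k$ and $\mathbb{A}_k$ denote the spaces of real symmetric and real antisymmetric $k\times k$ matrices; $\rho(\cdot)$ is the spectral radius; $i=\sqrt{-1}$. For even $m_k$, $\mu_k=m_k/2$ and $J_k:=\begin{bmatrix}0&I_{\mu_k}\\-I_{\mu_k}&0\end{bmatrix}$ ($k=1,2$). *)

theory Defs
  imports "Jordan_Normal_Form.Spectral_Radius"
begin

definition sym_mat :: "nat \<Rightarrow> real mat \<Rightarrow> bool" where
  "sym_mat n A \<longleftrightarrow> A \<in> carrier_mat n n \<and> A\<^sup>T = A"

definition antisym_mat :: "nat \<Rightarrow> real mat \<Rightarrow> bool" where
  "antisym_mat n A \<longleftrightarrow> A \<in> carrier_mat n n \<and> A\<^sup>T = - A"

definition pos_def_mat :: "nat \<Rightarrow> real mat \<Rightarrow> bool" where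
  "pos_def_mat n A \<longleftrightarrow> A \<in> carrier_mat n n \<and>
     (\<forall>v \<in> carrier_vec n. v \<noteq> 0\<^sub>v n \<longrightarrow> v \<bullet> (A *\<^sub>v v) > 0)"

definition herm_psd_mat :: "nat \<Rightarrow> complex mat \<Rightarrow> bool" where
  "herm_psd_mat n H \<longleftrightarrow> H \<in> carrier_mat n n \<and>
     (\<forall>i<n. \<forall>j<n. H $$ (i, j) = cnj (H $$ (j, i))) \<and>
     (\<forall>v \<in> carrier_vec n.
        Im (\<Sum>i<n. \<Sum>j<n. cnj (v $ i) * H $$ (i, j) * v $ j) = 0 \<and>
        Re (\<Sum>i<n. \<Sum>j<n. cnj (v $ i) * H $$ (i, j) * v $ j) \<ge> 0)"

(* J = [[0, I_mu], [-I_mu, 0]] of size m = 2 mu *)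
definition J_mat :: "nat \<Rightarrow> real mat" where
  "J_mat m = mat m m (\<lambda>(i, j).
      if i < m div 2 \<and> j = i + m div 2 then 1
      else if m div 2 \<le> i \<and> j + m div 2 = i then -1 else 0)"

definition plus_i_mat :: "real mat \<Rightarrow> real mat \<Rightarrow> complex mat" where
  "plus_i_mat P T = map_mat complex_of_real P + smult_mat \<i> (map_mat complex_of_real T)"

end

theory Submission
  imports Defs
begin

text \<open>
  Over \<open>\<complex>\<close>, triangularize \<open>B = U T U\<^sup>-\<^sup>1\<close>. Then \<open>X = N X B\<close> becomes \<open>Y = N Y T\<close> for \<open>Y = X U\<close>, and
  reading columns from left to right gives \<open>y\<^sub>j = T\<^sub>j\<^sub>j N y\<^sub>j\<close>. Since \<open>\<rho>(N) < 1\<close>, this forces \<open>y\<^sub>j = 0\<close>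
  whenever \<open>|T\<^sub>j\<^sub>j| \<le> 1\<close>. So the Stein operator \<open>X \<mapsto> X - N X B\<close> has trivial kernel, hence is
  bijective, as soon as every eigenvalue of \<open>B\<close> lies in the closed unit disc.

  For \<open>B = S\<close>: an eigenvector \<open>u\<close> of \<open>S\<^sup>T\<close> with eigenvalue \<open>\<mu>\<close> satisfies \<open>\<Theta> u = -\<mu> P u\<close> because
  \<open>P S\<^sup>T = -\<Theta>\<close>, so \<open>u\<^sup>* (P + i\<Theta>) u = (1 - i\<mu>) u\<^sup>* P u \<ge> 0\<close> gives \<open>Re \<mu> = 0\<close> and \<open>Im \<mu> \<ge> -1\<close>; the
  conjugate eigenvector gives \<open>Im \<mu> \<le> 1\<close>. For \<open>B = D J D\<^sup>T\<close> (including \<open>D = I\<close>): with \<open>w = D\<^sup>T v\<close>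
  one has \<open>|w| = |v|\<close> as \<open>D D\<^sup>T = I\<close>, and \<open>|\<mu>| |v|\<^sup>2 = |w\<^sup>* J w| \<le> |w|\<^sup>2\<close> since \<open>J\<close> is a signed
  permutation.
\<close>

abbreviation cmat :: "real mat \<Rightarrow> complex mat" where
  "cmat \<equiv> map_mat complex_of_real"

subsection \<open>Triangularization and the kernel of the Stein operator\<close>

lemma complex_triangularization:
  fixes A :: "complex mat"
  assumes A: "A \<in> carrier_mat n n"
  obtains T P Q where "similar_mat_wit A T P Q" and "upper_triangular T"
    and "\<And>j. j < n \<Longrightarrow> eigenvalue A (T $$ (j, j))"
proof -
  obtain es where cp: "char_poly A = (\<Prod>e \<leftarrow> es. [:- e, 1:])"
    using char_poly_factorized[OF A] by blast
  obtain T P Q where schur: "schur_decomposition A es = (T, P, Q)"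
    by (cases "schur_decomposition A es")
  from schur_decomposition[OF A cp schur] have wit: "similar_mat_wit A T P Q"
    and ut: "upper_triangular T" and diag: "diag_mat T = es" by auto
  have T: "T \<in> carrier_mat n n"
    using wit A unfolding similar_mat_wit_def Let_def by auto
  have "eigenvalue A (T $$ (j, j))" if j: "j < n" for j
  proof -
    have "T $$ (j, j) \<in> set es" using T j diag unfolding diag_mat_def by auto
    then show ?thesis
      unfolding eigenvalue_root_char_poly[OF A] cp by (auto simp: poly_prod_list)
  qed
  with wit ut that show ?thesis by blast
qed

lemma mult_upper_triangular_col:
  fixes Y T :: "'a :: comm_ring_1 mat"
  assumes Y: "Y \<in> carrier_mat q n" and T: "T \<in> carrier_mat n n" and ut: "upper_triangular T"
    and j: "j < n" and earlier: "\<And>k. k < j \<Longrightarrow> col Y k = 0\<^sub>v q"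
  shows "Y *\<^sub>v col T j = T $$ (j, j) \<cdot>\<^sub>v col Y j"
proof (rule eq_vecI)
  fix a assume "a < dim_vec (T $$ (j, j) \<cdot>\<^sub>v col Y j)"
  then have a: "a < q" using Y by auto
  have "(Y *\<^sub>v col T j) $ a = (\<Sum>k<n. Y $$ (a, k) * T $$ (k, j))"
    using a Y T j by (simp add: scalar_prod_def lessThan_atLeast0)
  also have "\<dots> = (\<Sum>k\<in>{j}. Y $$ (a, k) * T $$ (k, j))"
  proof (rule sum.mono_neutral_right)
    show "\<forall>k\<in>{..<n} - {j}. Y $$ (a, k) * T $$ (k, j) = 0"
    proof
      fix k assume k: "k \<in> {..<n} - {j}"
      show "Y $$ (a, k) * T $$ (k, j) = 0"
      proof (cases "k < j")
        case True
        then have "col Y k $ a = 0" using earlier a by simp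
        then show ?thesis using a Y k by simp
      next
        case False
        with k have "T $$ (k, j) = 0" using ut T unfolding upper_triangular_def by auto
        then show ?thesis by simp
      qed
    qed
  qed (use j in auto)
  also have "\<dots> = (T $$ (j, j) \<cdot>\<^sub>v col Y j) $ a" using a Y j by simp
  finally show "(Y *\<^sub>v col T j) $ a = (T $$ (j, j) \<cdot>\<^sub>v col Y j) $ a" .
qed (use Y T in simp)

lemma stein_kernel_upper_triangular:
  fixes N Y T :: "'a :: field mat"
  assumes N: "N \<in> carrier_mat q q" and T: "T \<in> carrier_mat n n" and Y: "Y \<in> carrier_mat q n"
    and ut: "upper_triangular T" and fixed: "Y = N * Y * T"
    and diag: "\<And>j v. j < n \<Longrightarrow> v \<in> carrier_vec q \<Longrightarrow> v = T $$ (j, j) \<cdot>\<^sub>v (N *\<^sub>v v) \<Longrightarrow> v = 0\<^sub>v q"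
  shows "Y = 0\<^sub>m q n"
proof -
  have "col Y j = 0\<^sub>v q" if "j < n" for j
    using that
  proof (induct j rule: less_induct)
    case (less j)
    have "col Y j = col (N * Y * T) j" using fixed by (rule arg_cong)
    also have "\<dots> = (N * Y) *\<^sub>v col T j" using N Y T less(2) by (intro col_mult2) auto
    also have "\<dots> = N *\<^sub>v (Y *\<^sub>v col T j)" using N Y T less(2) by (intro assoc_mult_mat_vec) auto
    also have "\<dots> = N *\<^sub>v (T $$ (j, j) \<cdot>\<^sub>v col Y j)"
      using mult_upper_triangular_col[OF Y T ut less(2)] less by simp
    also have "\<dots> = T $$ (j, j) \<cdot>\<^sub>v (N *\<^sub>v col Y j)"
      using N Y less(2) by (intro mult_mat_vec) auto
    finally show ?case using diag[OF less(2)] Y less(2) by auto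
  qed
  then show ?thesis using Y by (intro mat_col_eqI) auto
qed

lemma scaled_fixpoint_zero_if_spectral_radius_less_1:
  fixes N :: "complex mat"
  assumes N: "N \<in> carrier_mat q q" and sr: "spectral_radius N < 1"
    and mu: "cmod \<mu> \<le> 1" and v: "v \<in> carrier_vec q" and fixed: "v = \<mu> \<cdot>\<^sub>v (N *\<^sub>v v)"
  shows "v = 0\<^sub>v q"
proof (rule ccontr)
  assume nz: "v \<noteq> 0\<^sub>v q"
  have mu0: "\<mu> \<noteq> 0"
  proof
    assume "\<mu> = 0"
    then have "v = 0 \<cdot>\<^sub>v (N *\<^sub>v v)" using fixed by simp
    also have "\<dots> = 0\<^sub>v q" using N by (intro eq_vecI) auto
    finally show False using nz by simp
  qed
  have "(1 / \<mu>) \<cdot>\<^sub>v v = (1 / \<mu>) \<cdot>\<^sub>v (\<mu> \<cdot>\<^sub>v (N *\<^sub>v v))" using fixed by (rule arg_cong)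
  also have "\<dots> = N *\<^sub>v v" using mu0 by (intro eq_vecI) auto
  finally have "eigenvector N v (1 / \<mu>)"
    unfolding eigenvector_def using N v nz by auto
  then have "eigenvalue N (1 / \<mu>)" unfolding eigenvalue_def by auto
  moreover have "q > 0" using v nz by (cases q) auto
  ultimately have "norm (1 / \<mu>) \<le> spectral_radius N"
    using spectral_radius_mem_max(2)[OF N] by (auto simp: spectrum_def)
  moreover have "norm (1 / \<mu>) \<ge> 1" using mu mu0 by (simp add: norm_divide field_simps)
  ultimately show False using sr by auto
qed

lemma stein_kernel_trivial:
  fixes N B X :: "complex mat"
  assumes N: "N \<in> carrier_mat q q" and B: "B \<in> carrier_mat n n" and X: "X \<in> carrier_mat q n"
    and fixed: "X = N * X * B" and sr: "spectral_radius N < 1"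
    and eig_B: "\<And>\<mu>. eigenvalue B \<mu> \<Longrightarrow> cmod \<mu> \<le> 1"
  shows "X = 0\<^sub>m q n"
proof -
  obtain T P Q where wit: "similar_mat_wit B T P Q" and ut: "upper_triangular T"
    and eig_T: "\<And>j. j < n \<Longrightarrow> eigenvalue B (T $$ (j, j))"
    using complex_triangularization[OF B] by blast
  from wit B have T: "T \<in> carrier_mat n n" and P: "P \<in> carrier_mat n n" and Q: "Q \<in> carrier_mat n n"
    and PQ: "P * Q = 1\<^sub>m n" and QP: "Q * P = 1\<^sub>m n" and B_eq: "B = P * T * Q"
    unfolding similar_mat_wit_def Let_def by auto
  define Y where "Y = X * P"
  have Y: "Y \<in> carrier_mat q n" unfolding Y_def using X P by auto
  have NX: "N * X \<in> carrier_mat q n" and PT: "P * T \<in> carrier_mat n n" using N X P T by auto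
  have "Y = N * X * (P * T * Q) * P" unfolding Y_def using fixed B_eq by simp
  also have "\<dots> = N * X * (P * T * (Q * P))"
    using NX PT Q P by (simp add: assoc_mult_mat[of _ q n _ n])
  also have "\<dots> = N * Y * T * (Q * P)"
    unfolding Y_def assoc_mult_mat[OF N X P, symmetric] assoc_mult_mat[OF NX P T]
      assoc_mult_mat[OF NX PT mult_carrier_mat[OF Q P]] ..
  also have "\<dots> = N * Y * T" unfolding QP using N Y T by simp
  finally have "Y = N * Y * T" .
  then have "Y = 0\<^sub>m q n"
    using stein_kernel_upper_triangular[OF N T Y ut] eig_T eig_B
      scaled_fixpoint_zero_if_spectral_radius_less_1[OF N sr] by blast
  have "X = X * (P * Q)" unfolding PQ using X by simp
  also have "\<dots> = Y * Q" unfolding Y_def using X P Q by (simp add: assoc_mult_mat)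
  also have "\<dots> = 0\<^sub>m q n" using \<open>Y = 0\<^sub>m q n\<close> Q by simp
  finally show ?thesis .
qed

subsection \<open>Vectorization\<close>

definition vec_of_mat :: "nat \<Rightarrow> nat \<Rightarrow> 'a mat \<Rightarrow> 'a vec" where
  "vec_of_mat q n X = vec (q * n) (\<lambda>i. X $$ (i div n, i mod n))"

definition mat_of_vec :: "nat \<Rightarrow> nat \<Rightarrow> 'a vec \<Rightarrow> 'a mat" where
  "mat_of_vec q n v = mat q n (\<lambda>(r, c). v $ (r * n + c))"

lemma div_less_of_less_mult: "j < q * n \<Longrightarrow> j div n < q" for j q n :: nat
  by (simp add: less_mult_imp_div_less)

lemma mod_less_of_less_mult: "j < q * n \<Longrightarrow> j mod n < n" for j q n :: nat
  by (cases "n = 0") auto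

lemma add_mult_less_mult: "r < q \<Longrightarrow> c < n \<Longrightarrow> r * n + c < q * n" for r c q n :: nat
proof -
  assume "r < q" "c < n"
  then have "r * n + c < Suc r * n" by simp
  also have "\<dots> \<le> q * n" using \<open>r < q\<close> by (intro mult_right_mono) auto
  finally show ?thesis .
qed

lemma sum_nat_div_mod:
  fixes g :: "nat \<Rightarrow> nat \<Rightarrow> 'a :: comm_monoid_add"
  shows "(\<Sum>j<q * n. g (j div n) (j mod n)) = (\<Sum>a<q. \<Sum>b<n. g a b)"
proof (induct q)
  case (Suc q)
  have "(\<Sum>j<Suc q * n. g (j div n) (j mod n)) =
     (\<Sum>j\<in>{0..<q * n}. g (j div n) (j mod n)) + (\<Sum>j\<in>{q * n..<q * n + n}. g (j div n) (j mod n))"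
    unfolding lessThan_atLeast0 by (subst sum.atLeastLessThan_concat) (auto simp: add.commute)
  also have "(\<Sum>j\<in>{q * n..<q * n + n}. g (j div n) (j mod n))
      = (\<Sum>b\<in>{0..<n}. g ((b + q * n) div n) ((b + q * n) mod n))"
    using sum.shift_bounds_nat_ivl[of "\<lambda>j. g (j div n) (j mod n)" 0 "q * n" n] by (simp add: add.commute)
  also have "\<dots> = (\<Sum>b<n. g q b)" unfolding lessThan_atLeast0 by (intro sum.cong refl) auto
  finally show ?case using Suc by (simp add: lessThan_atLeast0)
qed simp

lemma vec_of_mat_carrier [simp]: "vec_of_mat q n X \<in> carrier_vec (q * n)"
  unfolding vec_of_mat_def by simp

lemma mat_of_vec_carrier [simp]: "mat_of_vec q n v \<in> carrier_mat q n"
  unfolding mat_of_vec_def by simp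

lemma mat_of_vec_of_mat: "X \<in> carrier_mat q n \<Longrightarrow> mat_of_vec q n (vec_of_mat q n X) = X"
  unfolding mat_of_vec_def vec_of_mat_def by (intro eq_matI) (auto simp: add_mult_less_mult)

lemma vec_of_mat_of_vec: "v \<in> carrier_vec (q * n) \<Longrightarrow> vec_of_mat q n (mat_of_vec q n v) = v"
  unfolding mat_of_vec_def vec_of_mat_def
  by (intro eq_vecI) (auto simp: div_less_of_less_mult mod_less_of_less_mult)

lemma vec_of_mat_zero: "vec_of_mat q n (0\<^sub>m q n) = 0\<^sub>v (q * n)"
  unfolding vec_of_mat_def by (intro eq_vecI) (auto simp: div_less_of_less_mult mod_less_of_less_mult)

lemma bij_betw_if_vectorized_kernel_trivial:
  fixes f :: "'a :: field mat \<Rightarrow> 'a mat" and M :: "'a mat"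
  assumes M: "M \<in> carrier_mat (q * n) (q * n)"
    and f_carrier: "\<And>X. X \<in> carrier_mat q n \<Longrightarrow> f X \<in> carrier_mat q n"
    and f_vec: "\<And>X. X \<in> carrier_mat q n \<Longrightarrow> vec_of_mat q n (f X) = M *\<^sub>v vec_of_mat q n X"
    and ker: "\<And>X. X \<in> carrier_mat q n \<Longrightarrow> f X = 0\<^sub>m q n \<Longrightarrow> X = 0\<^sub>m q n"
  shows "bij_betw f (carrier_mat q n) (carrier_mat q n)"
proof -
  have "v = 0\<^sub>v (q * n)" if v: "v \<in> carrier_vec (q * n)" and Mv: "M *\<^sub>v v = 0\<^sub>v (q * n)" for v
  proof -
    have "vec_of_mat q n (f (mat_of_vec q n v)) = 0\<^sub>v (q * n)"
      unfolding f_vec[OF mat_of_vec_carrier] vec_of_mat_of_vec[OF v] Mv ..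
    then have "f (mat_of_vec q n v) = 0\<^sub>m q n"
      by (metis f_carrier mat_of_vec_carrier mat_of_vec_of_mat vec_of_mat_zero zero_carrier_mat)
    then have "mat_of_vec q n v = 0\<^sub>m q n" by (rule ker[OF mat_of_vec_carrier])
    then show ?thesis by (metis v vec_of_mat_of_vec vec_of_mat_zero)
  qed
  then have "det M \<noteq> 0" using det_0_iff_vec_prod_zero_field[OF M] by blast
  from det_non_zero_imp_unit[OF M this, of "()"] obtain M' where M': "M' \<in> carrier_mat (q * n) (q * n)"
    and MM': "M * M' = 1\<^sub>m (q * n)" and M'M: "M' * M = 1\<^sub>m (q * n)"
    unfolding Units_def ring_mat_def by auto
  show ?thesis
  proof (rule bij_betw_imageI)
    show "inj_on f (carrier_mat q n)"
    proof (rule inj_onI)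
      fix X Y assume X: "X \<in> carrier_mat q n" and Y: "Y \<in> carrier_mat q n" and "f X = f Y"
      then have "M' *\<^sub>v (M *\<^sub>v vec_of_mat q n X) = M' *\<^sub>v (M *\<^sub>v vec_of_mat q n Y)"
        using f_vec by metis
      then have "vec_of_mat q n X = vec_of_mat q n Y"
        using M M' M'M by (metis assoc_mult_mat_vec one_mult_mat_vec vec_of_mat_carrier)
      then show "X = Y" using mat_of_vec_of_mat[OF X] mat_of_vec_of_mat[OF Y] by metis
    qed
    have "Y \<in> f ` carrier_mat q n" if Y: "Y \<in> carrier_mat q n" for Y
    proof -
      define X where "X = mat_of_vec q n (M' *\<^sub>v vec_of_mat q n Y)"
      have X: "X \<in> carrier_mat q n" unfolding X_def by simp
      have "vec_of_mat q n (f X) = M *\<^sub>v (M' *\<^sub>v vec_of_mat q n Y)"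
        using f_vec[OF X] M' unfolding X_def by (simp add: vec_of_mat_of_vec)
      also have "\<dots> = vec_of_mat q n Y"
        using M M' MM' by (metis assoc_mult_mat_vec one_mult_mat_vec vec_of_mat_carrier)
      finally have "f X = Y" by (metis X Y f_carrier mat_of_vec_of_mat)
      with X show ?thesis by blast
    qed
    then show "f ` carrier_mat q n = carrier_mat q n" using f_carrier by blast
  qed
qed

text \<open>The matrix of \<open>X \<mapsto> X - N X B\<close> in row-major coordinates, i.e.\ \<open>I - N \<otimes> B\<^sup>T\<close>.\<close>

definition stein_matrix :: "nat \<Rightarrow> nat \<Rightarrow> 'a :: ring_1 mat \<Rightarrow> 'a mat \<Rightarrow> 'a mat" where
  "stein_matrix q n N B = mat (q * n) (q * n) (\<lambda>(i, j). (if i = j then 1 else 0)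
      - N $$ (i div n, j div n) * B $$ (j mod n, i mod n))"

lemma vec_of_mat_stein:
  fixes N B X :: "'a :: comm_ring_1 mat"
  assumes N: "N \<in> carrier_mat q q" and B: "B \<in> carrier_mat n n" and X: "X \<in> carrier_mat q n"
  shows "vec_of_mat q n (X - N * X * B) = stein_matrix q n N B *\<^sub>v vec_of_mat q n X"
proof (rule eq_vecI)
  fix i assume "i < dim_vec (stein_matrix q n N B *\<^sub>v vec_of_mat q n X)"
  then have i: "i < q * n" by (simp add: stein_matrix_def)
  define r where "r = i div n"
  define c where "c = i mod n"
  have r: "r < q" and c: "c < n"
    using i div_less_of_less_mult mod_less_of_less_mult unfolding r_def c_def by auto
  have NXB: "(N * X * B) $$ (r, c) = (\<Sum>a<q. \<Sum>b<n. N $$ (r, a) * B $$ (b, c) * X $$ (a, b))"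
  proof -
    have "(N * X * B) $$ (r, c) = (\<Sum>a<q. N $$ (r, a) * (\<Sum>b<n. X $$ (a, b) * B $$ (b, c)))"
      using N X B r c by (simp add: scalar_prod_def lessThan_atLeast0)
    then show ?thesis by (simp add: sum_distrib_left algebra_simps)
  qed
  have "(stein_matrix q n N B *\<^sub>v vec_of_mat q n X) $ i
      = (\<Sum>j<q * n. (if i = j then X $$ (j div n, j mod n) else 0)
          - N $$ (r, j div n) * B $$ (j mod n, c) * X $$ (j div n, j mod n))"
    using i unfolding stein_matrix_def vec_of_mat_def r_def c_def
    by (auto simp: scalar_prod_def lessThan_atLeast0 algebra_simps intro!: sum.cong)
  also have "\<dots> = X $$ (r, c) - (\<Sum>a<q. \<Sum>b<n. N $$ (r, a) * B $$ (b, c) * X $$ (a, b))"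
    unfolding sum_subtractf sum_nat_div_mod[of "\<lambda>a b. N $$ (r, a) * B $$ (b, c) * X $$ (a, b)"]
    using i by (simp add: r_def c_def)
  also have "\<dots> = vec_of_mat q n (X - N * X * B) $ i"
    unfolding NXB[symmetric] vec_of_mat_def using i r c X N B by (simp add: r_def c_def)
  finally show "vec_of_mat q n (X - N * X * B) $ i = (stein_matrix q n N B *\<^sub>v vec_of_mat q n X) $ i"
    by simp
qed (simp add: vec_of_mat_def stein_matrix_def)

lemma stein_bij_if_kernel_trivial:
  fixes N B :: "'a :: field mat"
  assumes N: "N \<in> carrier_mat q q" and B: "B \<in> carrier_mat n n"
    and ker: "\<And>X. X \<in> carrier_mat q n \<Longrightarrow> X = N * X * B \<Longrightarrow> X = 0\<^sub>m q n"
  shows "bij_betw (\<lambda>X. X - N * X * B) (carrier_mat q n) (carrier_mat q n)"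
proof (rule bij_betw_if_vectorized_kernel_trivial)
  show "stein_matrix q n N B \<in> carrier_mat (q * n) (q * n)" by (simp add: stein_matrix_def)
  fix X :: "'a mat" assume X: "X \<in> carrier_mat q n"
  show "X - N * X * B \<in> carrier_mat q n" using N B X by (metis minus_carrier_mat mult_carrier_mat)
  show "vec_of_mat q n (X - N * X * B) = stein_matrix q n N B *\<^sub>v vec_of_mat q n X"
    by (rule vec_of_mat_stein[OF N B X])
  assume zero: "X - N * X * B = 0\<^sub>m q n"
  have "X = N * X * B"
  proof (rule eq_matI)
    fix i j assume ij: "i < dim_row (N * X * B)" "j < dim_col (N * X * B)"
    then have "(X - N * X * B) $$ (i, j) = 0" unfolding zero using N B by simp
    then show "X $$ (i, j) = (N * X * B) $$ (i, j)" using ij N B X by simp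
  qed (use N B X in auto)
  then show "X = 0\<^sub>m q n" by (rule ker[OF X])
qed

lemma real_stein_bij:
  fixes N B :: "real mat"
  assumes N: "N \<in> carrier_mat q q" and B: "B \<in> carrier_mat n n"
    and sr: "spectral_radius (cmat N) < 1"
    and eig_B: "\<And>\<mu>. eigenvalue (cmat B) \<mu> \<Longrightarrow> cmod \<mu> \<le> 1"
  shows "bij_betw (\<lambda>X. X - N * X * B) (carrier_mat q n) (carrier_mat q n)"
proof (rule stein_bij_if_kernel_trivial[OF N B])
  fix X assume X: "X \<in> carrier_mat q n" and fixed: "X = N * X * B"
  have "cmat X = cmat N * cmat X * cmat B"
    using arg_cong[OF fixed, of cmat] N X B
    by (simp add: of_real_hom.mat_hom_mult[of _ q q _ n] of_real_hom.mat_hom_mult[of _ q n _ n])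
  then have "cmat X = 0\<^sub>m q n"
    using stein_kernel_trivial[of "cmat N" q "cmat B" n "cmat X"] N B X sr eig_B by simp
  moreover have "cmat (0\<^sub>m q n) = 0\<^sub>m q n" by (intro eq_matI) auto
  ultimately show "X = 0\<^sub>m q n" by (metis of_real_hom.mat_hom_inj)
qed

subsection \<open>Spectral bounds\<close>

lemma eigenvalue_transpose_iff:
  fixes A :: "'a :: field mat"
  assumes A: "A \<in> carrier_mat n n"
  shows "eigenvalue A\<^sup>T \<mu> = eigenvalue A \<mu>"
proof -
  have At: "A\<^sup>T \<in> carrier_mat n n" using A by auto
  show ?thesis unfolding eigenvalue_root_char_poly[OF A] eigenvalue_root_char_poly[OF At]
    char_poly_transpose_mat[OF A] ..
qed
definition herm_inner :: "complex vec \<Rightarrow> complex vec \<Rightarrow> complex" where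
  "herm_inner u v = (\<Sum>i<dim_vec u. cnj (u $ i) * v $ i)"

lemma herm_inner_self: "herm_inner v v = of_real (\<Sum>i<dim_vec v. (cmod (v $ i))\<^sup>2)"
  unfolding herm_inner_def of_real_sum by (intro sum.cong refl) (metis complex_norm_square mult.commute)

lemma herm_inner_self_nonzero:
  assumes nz: "v \<noteq> 0\<^sub>v (dim_vec v)"
  shows "herm_inner v v \<noteq> 0"
proof
  assume "herm_inner v v = 0"
  then have "(\<Sum>i<dim_vec v. (cmod (v $ i))\<^sup>2) = 0" unfolding herm_inner_self by (simp only: of_real_eq_0_iff)
  then have "\<forall>i<dim_vec v. v $ i = 0" by (simp add: sum_nonneg_eq_0_iff)
  then have "v = 0\<^sub>v (dim_vec v)" by (intro eq_vecI) auto
  with nz show False ..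
qed

lemma herm_inner_smult_right:
  "dim_vec v = dim_vec u \<Longrightarrow> herm_inner u (c \<cdot>\<^sub>v v) = c * herm_inner u v"
  unfolding herm_inner_def by (simp add: sum_distrib_left algebra_simps)

lemma cmat_mult_vec_index:
  assumes A: "A \<in> carrier_mat n m" and u: "u \<in> carrier_vec m" and i: "i < n"
  shows "(cmat A *\<^sub>v u) $ i = (\<Sum>j<m. of_real (A $$ (i, j)) * u $ j)"
  using A u i by (simp add: scalar_prod_def lessThan_atLeast0)

lemma cmat_mult_vec_conjugate:
  assumes A: "A \<in> carrier_mat n m" and u: "u \<in> carrier_vec m"
  shows "cmat A *\<^sub>v conjugate u = conjugate (cmat A *\<^sub>v u)"
proof (rule eq_vecI)
  fix i assume "i < dim_vec (conjugate (cmat A *\<^sub>v u))"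
  then have i: "i < n" using A by simp
  show "(cmat A *\<^sub>v conjugate u) $ i = conjugate (cmat A *\<^sub>v u) $ i"
    unfolding cmat_mult_vec_index[OF A carrier_vec_conjugate[OF u] i]
    using i A u by (simp add: cmat_mult_vec_index[OF A u i] cnj_sum)
qed (use A in simp)

lemma herm_inner_cmat_adjoint:
  assumes D: "D \<in> carrier_mat p m" and v: "v \<in> carrier_vec p" and y: "y \<in> carrier_vec m"
  shows "herm_inner v (cmat D *\<^sub>v y) = herm_inner (cmat D\<^sup>T *\<^sub>v v) y"
proof -
  have Dt: "D\<^sup>T \<in> carrier_mat m p" using D by auto
  have "herm_inner v (cmat D *\<^sub>v y) = (\<Sum>i<p. \<Sum>k<m. cnj (v $ i) * (of_real (D $$ (i, k)) * y $ k))"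
    unfolding herm_inner_def using v
    by (intro sum.cong refl) (simp_all add: cmat_mult_vec_index[OF D y] sum_distrib_left)
  also have "\<dots> = (\<Sum>k<m. \<Sum>i<p. cnj (v $ i) * (of_real (D $$ (i, k)) * y $ k))" by (rule sum.swap)
  also have "\<dots> = (\<Sum>k<m. cnj ((cmat D\<^sup>T *\<^sub>v v) $ k) * y $ k)"
  proof (intro sum.cong refl)
    fix k assume "k \<in> {..<m}"
    then have k: "k < m" by simp
    show "(\<Sum>i<p. cnj (v $ i) * (of_real (D $$ (i, k)) * y $ k)) = cnj ((cmat D\<^sup>T *\<^sub>v v) $ k) * y $ k"
      unfolding cmat_mult_vec_index[OF Dt v k] cnj_sum sum_distrib_right
      using k D by (intro sum.cong refl) auto
  qed
  also have "\<dots> = herm_inner (cmat D\<^sup>T *\<^sub>v v) y" unfolding herm_inner_def using Dt v by simp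
  finally show ?thesis .
qed

lemma herm_inner_cmat:
  assumes A: "A \<in> carrier_mat n n" and u: "u \<in> carrier_vec n"
  shows "herm_inner u (cmat A *\<^sub>v u) = (\<Sum>i<n. \<Sum>j<n. cnj (u $ i) * (of_real (A $$ (i, j)) * u $ j))"
  unfolding herm_inner_def using u
  by (intro sum.cong) (auto simp: cmat_mult_vec_index[OF A u] sum_distrib_left)

lemma herm_inner_plus_i_mat:
  assumes P: "P \<in> carrier_mat n n" and T: "T \<in> carrier_mat n n" and u: "u \<in> carrier_vec n"
  shows "(\<Sum>i<n. \<Sum>j<n. cnj (u $ i) * plus_i_mat P T $$ (i, j) * u $ j)
    = herm_inner u (cmat P *\<^sub>v u) + \<i> * herm_inner u (cmat T *\<^sub>v u)"
proof -
  have "(\<Sum>i<n. \<Sum>j<n. cnj (u $ i) * plus_i_mat P T $$ (i, j) * u $ j)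
    = (\<Sum>i<n. \<Sum>j<n. cnj (u $ i) * (of_real (P $$ (i, j)) * u $ j)
        + \<i> * (cnj (u $ i) * (of_real (T $$ (i, j)) * u $ j)))"
    using P T by (intro sum.cong refl) (auto simp: plus_i_mat_def algebra_simps)
  then show ?thesis
    unfolding herm_inner_cmat[OF P u] herm_inner_cmat[OF T u] by (simp add: sum.distrib sum_distrib_left)
qed

lemma Re_herm_inner_cmat:
  assumes P: "P \<in> carrier_mat n n" and u: "u \<in> carrier_vec n"
  defines "a \<equiv> vec n (\<lambda>i. Re (u $ i))" and "b \<equiv> vec n (\<lambda>i. Im (u $ i))"
  shows "Re (herm_inner u (cmat P *\<^sub>v u)) = a \<bullet> (P *\<^sub>v a) + b \<bullet> (P *\<^sub>v b)"
proof -
  have "a \<bullet> (P *\<^sub>v a) = (\<Sum>i<n. \<Sum>j<n. P $$ (i, j) * (Re (u $ i) * Re (u $ j)))"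
    using P unfolding a_def by (simp add: scalar_prod_def lessThan_atLeast0 sum_distrib_left algebra_simps)
  moreover have "b \<bullet> (P *\<^sub>v b) = (\<Sum>i<n. \<Sum>j<n. P $$ (i, j) * (Im (u $ i) * Im (u $ j)))"
    using P unfolding b_def by (simp add: scalar_prod_def lessThan_atLeast0 sum_distrib_left algebra_simps)
  moreover have "Re (herm_inner u (cmat P *\<^sub>v u)) = (\<Sum>i<n. \<Sum>j<n. P $$ (i, j) * (Re (u $ i) * Re (u $ j))
     + P $$ (i, j) * (Im (u $ i) * Im (u $ j)))"
    unfolding herm_inner_cmat[OF P u] Re_sum by (intro sum.cong refl) (simp add: algebra_simps)
  ultimately show ?thesis by (simp add: sum.distrib)
qed

lemma Im_herm_inner_cmat_sym:
  assumes sym: "sym_mat n P" and u: "u \<in> carrier_vec n"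
  shows "Im (herm_inner u (cmat P *\<^sub>v u)) = 0"
proof -
  have P: "P \<in> carrier_mat n n" using sym unfolding sym_mat_def by auto
  have P_sym: "P $$ (j, i) = P $$ (i, j)" if "i < n" "j < n" for i j
    using sym P that unfolding sym_mat_def by (metis index_transpose_mat(1) carrier_matD)
  have "Im (herm_inner u (cmat P *\<^sub>v u)) = (\<Sum>i<n. \<Sum>j<n. P $$ (i, j) * (Re (u $ i) * Im (u $ j)))
      - (\<Sum>i<n. \<Sum>j<n. P $$ (i, j) * (Im (u $ i) * Re (u $ j)))"
    unfolding herm_inner_cmat[OF P u] Im_sum sum_subtractf[symmetric]
    by (intro sum.cong refl) (simp add: algebra_simps)
  also have "(\<Sum>i<n. \<Sum>j<n. P $$ (i, j) * (Im (u $ i) * Re (u $ j)))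
      = (\<Sum>j<n. \<Sum>i<n. P $$ (i, j) * (Im (u $ i) * Re (u $ j)))" by (rule sum.swap)
  also have "\<dots> = (\<Sum>i<n. \<Sum>j<n. P $$ (i, j) * (Re (u $ i) * Im (u $ j)))"
    by (intro sum.cong refl) (simp add: P_sym algebra_simps)
  finally show ?thesis by simp
qed

lemma Re_herm_inner_cmat_pos_def:
  assumes pd: "pos_def_mat n P" and u: "u \<in> carrier_vec n" and nz: "u \<noteq> 0\<^sub>v n"
  shows "Re (herm_inner u (cmat P *\<^sub>v u)) > 0"
proof -
  have P: "P \<in> carrier_mat n n" using pd unfolding pos_def_mat_def by auto
  define a where "a = vec n (\<lambda>i. Re (u $ i))"
  define b where "b = vec n (\<lambda>i. Im (u $ i))"
  have ab: "a \<in> carrier_vec n" "b \<in> carrier_vec n" unfolding a_def b_def by auto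
  have nonneg: "v \<bullet> (P *\<^sub>v v) \<ge> 0" if "v \<in> carrier_vec n" for v
    using pd that P unfolding pos_def_mat_def
    by (cases "v = 0\<^sub>v n") (auto simp: scalar_prod_def intro: less_imp_le)
  have "a \<noteq> 0\<^sub>v n \<or> b \<noteq> 0\<^sub>v n"
  proof (rule ccontr)
    assume "\<not> (a \<noteq> 0\<^sub>v n \<or> b \<noteq> 0\<^sub>v n)"
    then have "\<forall>i<n. Re (u $ i) = 0 \<and> Im (u $ i) = 0"
      unfolding a_def b_def by (metis index_vec index_zero_vec(1))
    then have "u = 0\<^sub>v n" using u by (intro eq_vecI) (auto simp: complex_eq_iff)
    with nz show False ..
  qed
  then have "a \<bullet> (P *\<^sub>v a) > 0 \<or> b \<bullet> (P *\<^sub>v b) > 0" using pd ab unfolding pos_def_mat_def by auto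
  then show ?thesis
    unfolding Re_herm_inner_cmat[OF P u] a_def[symmetric] b_def[symmetric]
    using nonneg[OF ab(1)] nonneg[OF ab(2)] by auto
qed

lemma pencil_eigenvalue_bound:
  assumes sym: "sym_mat n P" and pd: "pos_def_mat n P" and T: "T \<in> carrier_mat n n"
    and psd: "herm_psd_mat n (plus_i_mat P T)"
    and u: "u \<in> carrier_vec n" and nz: "u \<noteq> 0\<^sub>v n"
    and eigen: "cmat T *\<^sub>v u = (- \<mu>) \<cdot>\<^sub>v (cmat P *\<^sub>v u)"
  shows "Re \<mu> = 0 \<and> Im \<mu> \<ge> -1"
proof -
  have P: "P \<in> carrier_mat n n" using sym unfolding sym_mat_def by auto
  define r where "r = Re (herm_inner u (cmat P *\<^sub>v u))"
  have r: "r > 0" unfolding r_def by (rule Re_herm_inner_cmat_pos_def[OF pd u nz])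
  have uPu: "herm_inner u (cmat P *\<^sub>v u) = of_real r"
    unfolding r_def using Im_herm_inner_cmat_sym[OF sym u] by (simp add: complex_eq_iff)
  have "herm_inner u (cmat T *\<^sub>v u) = - \<mu> * herm_inner u (cmat P *\<^sub>v u)"
    unfolding eigen using P u by (intro herm_inner_smult_right) simp
  then have uTu: "herm_inner u (cmat T *\<^sub>v u) = - \<mu> * of_real r" unfolding uPu .
  from psd u have "Im (\<Sum>i<n. \<Sum>j<n. cnj (u $ i) * plus_i_mat P T $$ (i, j) * u $ j) = 0 \<and>
      Re (\<Sum>i<n. \<Sum>j<n. cnj (u $ i) * plus_i_mat P T $$ (i, j) * u $ j) \<ge> 0"
    unfolding herm_psd_mat_def by blast
  then have "Im (of_real r * (1 - \<i> * \<mu>)) = 0 \<and> Re (of_real r * (1 - \<i> * \<mu>)) \<ge> 0"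
    unfolding herm_inner_plus_i_mat[OF P T u] uPu uTu by (simp add: algebra_simps)
  then have "r * Re \<mu> = 0 \<and> r * (1 + Im \<mu>) \<ge> 0" by (simp add: algebra_simps)
  with r show ?thesis by (auto simp: zero_le_mult_iff)
qed

lemma pencil_of_transpose_eigenvector:
  fixes P S T :: "real mat"
  assumes P: "P \<in> carrier_mat n n" and S: "S \<in> carrier_mat n n" and T: "T \<in> carrier_mat n n"
    and PSt: "P * S\<^sup>T = - T"
    and u: "u \<in> carrier_vec n" and eigen: "cmat S\<^sup>T *\<^sub>v u = \<mu> \<cdot>\<^sub>v u"
  shows "cmat T *\<^sub>v u = (- \<mu>) \<cdot>\<^sub>v (cmat P *\<^sub>v u)"
proof -
  have St: "S\<^sup>T \<in> carrier_mat n n" using S by auto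
  have mT: "- T \<in> carrier_mat n n" using T by simp
  have "- (cmat T *\<^sub>v u) = cmat (P * S\<^sup>T) *\<^sub>v u"
  proof (rule eq_vecI)
    fix i assume "i < dim_vec (cmat (P * S\<^sup>T) *\<^sub>v u)"
    then have i: "i < n" using P by simp
    show "(- (cmat T *\<^sub>v u)) $ i = (cmat (P * S\<^sup>T) *\<^sub>v u) $ i"
      unfolding PSt cmat_mult_vec_index[OF mT u i] using i T
      by (simp add: cmat_mult_vec_index[OF T u i] sum_negf[symmetric])
  qed (use P T in simp)
  also have "\<dots> = cmat P *\<^sub>v (cmat S\<^sup>T *\<^sub>v u)"
    unfolding of_real_hom.mat_hom_mult[OF P St] using P St u by simp
  also have "\<dots> = \<mu> \<cdot>\<^sub>v (cmat P *\<^sub>v u)" unfolding eigen using P u by (intro mult_mat_vec) auto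
  finally have "cmat T *\<^sub>v u = - (\<mu> \<cdot>\<^sub>v (cmat P *\<^sub>v u))" by (metis uminus_uminus_vec)
  also have "\<dots> = (- \<mu>) \<cdot>\<^sub>v (cmat P *\<^sub>v u)" by (intro eq_vecI) auto
  finally show ?thesis .
qed

lemma eigenvalue_norm_le_1_if_herm_psd:
  fixes P T S :: "real mat"
  assumes sym: "sym_mat n P" and pd: "pos_def_mat n P" and anti: "antisym_mat n T"
    and psd: "herm_psd_mat n (plus_i_mat P T)"
    and S: "S \<in> carrier_mat n n" and SP: "S * P = T"
    and eig: "eigenvalue (cmat S) \<mu>"
  shows "cmod \<mu> \<le> 1"
proof -
  have P: "P \<in> carrier_mat n n" and T: "T \<in> carrier_mat n n"
    using sym anti unfolding sym_mat_def antisym_mat_def by auto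
  have "P * S\<^sup>T = (S * P)\<^sup>T" using P S sym by (simp add: transpose_mult sym_mat_def)
  then have PSt: "P * S\<^sup>T = - T" using SP anti unfolding antisym_mat_def by simp
  have "eigenvalue (cmat S\<^sup>T) \<mu>"
    using eig eigenvalue_transpose_iff[of "cmat S" n] S by (simp add: map_mat_transpose)
  then obtain u where u: "u \<in> carrier_vec n" and nz: "u \<noteq> 0\<^sub>v n" and eigen: "cmat S\<^sup>T *\<^sub>v u = \<mu> \<cdot>\<^sub>v u"
    unfolding eigenvalue_def eigenvector_def using S by auto
  have "Re \<mu> = 0 \<and> Im \<mu> \<ge> -1"
    using pencil_eigenvalue_bound[OF sym pd T psd u nz]
      pencil_of_transpose_eigenvector[OF P S T PSt u eigen] by blast
  moreover have "cmat S\<^sup>T *\<^sub>v conjugate u = cnj \<mu> \<cdot>\<^sub>v conjugate u"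
    using cmat_mult_vec_conjugate[of "S\<^sup>T" n n u] S u unfolding eigen
    by (intro eq_vecI) auto
  then have "Re (cnj \<mu>) = 0 \<and> Im (cnj \<mu>) \<ge> -1"
    using pencil_eigenvalue_bound[OF sym pd T psd carrier_vec_conjugate[OF u]]
      pencil_of_transpose_eigenvector[OF P S T PSt carrier_vec_conjugate[OF u]] nz u
    by (metis conjugate_zero_iff_vec)
  ultimately show ?thesis by (simp add: cmod_def abs_le_iff)
qed

lemma J_mat_mult_vec_index:
  assumes m: "m = 2 * h" and w: "w \<in> carrier_vec m" and k: "k < m"
  shows "(cmat (J_mat m) *\<^sub>v w) $ k = (if k < h then w $ (k + h) else - w $ (k - h))"
proof -
  have J: "J_mat m \<in> carrier_mat m m" unfolding J_mat_def by auto
  have "(cmat (J_mat m) *\<^sub>v w) $ k = (\<Sum>j<m. of_real (J_mat m $$ (k, j)) * w $ j)"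
    by (rule cmat_mult_vec_index[OF J w k])
  also have "\<dots> = (\<Sum>j<m. if j = (if k < h then k + h else k - h) then
                      (if k < h then w $ j else - w $ j) else 0)"
    using k m by (intro sum.cong refl) (auto simp: J_mat_def)
  also have "\<dots> = (if k < h then w $ (k + h) else - w $ (k - h))"
    using k m by (auto simp: sum.delta)
  finally show ?thesis .
qed

lemma J_mat_herm_inner_bound:
  assumes m: "even m" and w: "w \<in> carrier_vec m"
  shows "cmod (herm_inner w (cmat (J_mat m) *\<^sub>v w)) \<le> cmod (herm_inner w w)"
proof -
  obtain h where m: "m = 2 * h" using \<open>even m\<close> by auto
  define \<sigma> where "\<sigma> k = (if k < h then k + h else k - h)" for k
  have norm_Jw: "cmod ((cmat (J_mat m) *\<^sub>v w) $ k) = cmod (w $ \<sigma> k)" if "k < m" for k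
    unfolding J_mat_mult_vec_index[OF m w that] \<sigma>_def by auto
  have "bij_betw \<sigma> {..<m} {..<m}"
    by (rule bij_betw_byWitness[where f' = \<sigma>]) (auto simp: \<sigma>_def m)
  then have reindex: "(\<Sum>k<m. (cmod (w $ \<sigma> k))\<^sup>2) = (\<Sum>k<m. (cmod (w $ k))\<^sup>2)"
    using sum.reindex_bij_betw[of \<sigma> "{..<m}" "{..<m}" "\<lambda>k. (cmod (w $ k))\<^sup>2"] by simp
  have "cmod (herm_inner w (cmat (J_mat m) *\<^sub>v w))
      \<le> (\<Sum>k<m. cmod (cnj (w $ k) * (cmat (J_mat m) *\<^sub>v w) $ k))"
    unfolding herm_inner_def using w by (simp add: norm_sum)
  also have "\<dots> = (\<Sum>k<m. cmod (w $ k) * cmod (w $ \<sigma> k))"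
    by (intro sum.cong refl) (simp add: norm_mult norm_Jw)
  also have "\<dots> \<le> (\<Sum>k<m. ((cmod (w $ k))\<^sup>2 + (cmod (w $ \<sigma> k))\<^sup>2) / 2)"
  proof (intro sum_mono)
    fix k
    have "0 \<le> (cmod (w $ k) - cmod (w $ \<sigma> k))\<^sup>2" by simp
    then show "cmod (w $ k) * cmod (w $ \<sigma> k) \<le> ((cmod (w $ k))\<^sup>2 + (cmod (w $ \<sigma> k))\<^sup>2) / 2"
      by (simp add: power2_diff)
  qed
  also have "\<dots> = (\<Sum>k<m. (cmod (w $ k))\<^sup>2)"
    unfolding sum_divide_distrib[symmetric] sum.distrib reindex by simp
  also have "\<dots> = cmod (herm_inner w w)"
    unfolding herm_inner_self norm_of_real using w by (simp add: abs_of_nonneg sum_nonneg)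
  finally show ?thesis .
qed

lemma eigenvalue_J_compression_norm_le_1:
  fixes D :: "real mat"
  assumes D: "D \<in> carrier_mat p m" and DDt: "D * D\<^sup>T = 1\<^sub>m p" and m: "even m"
    and eig: "eigenvalue (cmat (D * J_mat m * D\<^sup>T)) \<mu>"
  shows "cmod \<mu> \<le> 1"
proof -
  have J: "J_mat m \<in> carrier_mat m m" unfolding J_mat_def by auto
  have Dt: "D\<^sup>T \<in> carrier_mat m p" using D by auto
  from eig obtain v where v: "v \<in> carrier_vec p" and nz: "v \<noteq> 0\<^sub>v p"
    and eigen: "cmat (D * J_mat m * D\<^sup>T) *\<^sub>v v = \<mu> \<cdot>\<^sub>v v"
    unfolding eigenvalue_def eigenvector_def using D by auto
  define w where "w = cmat D\<^sup>T *\<^sub>v v"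
  have w: "w \<in> carrier_vec m" unfolding w_def using Dt v by auto
  have Jw: "cmat (J_mat m) *\<^sub>v w \<in> carrier_vec m" using J w by auto
  have "cmat (D * J_mat m * D\<^sup>T) = cmat D * (cmat (J_mat m) * cmat D\<^sup>T)"
    using D J Dt by (simp add: of_real_hom.mat_hom_mult[of _ p m _ p] of_real_hom.mat_hom_mult[of _ m m _ p]
      of_real_hom.mat_hom_mult[of _ p m _ m] assoc_mult_mat[of D p m "J_mat m" m])
  then have DJDt_v: "cmat (D * J_mat m * D\<^sup>T) *\<^sub>v v = cmat D *\<^sub>v (cmat (J_mat m) *\<^sub>v w)"
    unfolding w_def using D J Dt v by (simp add: assoc_mult_mat_vec[of _ p m _ p])
  have "cmat D *\<^sub>v w = cmat (D * D\<^sup>T) *\<^sub>v v"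
    unfolding w_def using D Dt v by (simp add: of_real_hom.mat_hom_mult assoc_mult_mat_vec)
  then have D_w: "cmat D *\<^sub>v w = v" unfolding DDt of_real_hom.mat_hom_one using v by simp
  have "herm_inner v v = herm_inner v (cmat D *\<^sub>v w)" unfolding D_w ..
  also have "\<dots> = herm_inner w w" unfolding herm_inner_cmat_adjoint[OF D v w] w_def[symmetric] ..
  finally have "herm_inner w w = herm_inner v v" ..
  moreover have "\<mu> * herm_inner v v = herm_inner w (cmat (J_mat m) *\<^sub>v w)"
    using herm_inner_smult_right[of v v \<mu>] herm_inner_cmat_adjoint[OF D v Jw]
    unfolding eigen[symmetric] DJDt_v w_def by simp
  ultimately have "cmod \<mu> * cmod (herm_inner v v) \<le> cmod (herm_inner v v)"
    using J_mat_herm_inner_bound[OF m w] by (metis norm_mult)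
  moreover have "cmod (herm_inner v v) > 0" using herm_inner_self_nonzero[of v] nz v by auto
  ultimately show ?thesis by simp
qed


theorem mainTheorem8:
  fixes q m1 m2 p :: nat
    and P22 Q22 Theta2 Xi D N S :: "real mat"
  assumes "even q" and "even m1" and "even m2"
    and "sym_mat q P22" and "pos_def_mat q P22"
    and "sym_mat q Q22" and "pos_def_mat q Q22"
    and "antisym_mat q Theta2" and "invertible_mat Theta2"
    and "herm_psd_mat q (plus_i_mat P22 Theta2)"
    and "antisym_mat q Xi"
    and "N \<in> carrier_mat q q" and "Q22 * N = Xi"
    and "S \<in> carrier_mat q q" and "S * P22 = Theta2"
    and "D \<in> carrier_mat p m1" and "D * D\<^sup>T = 1\<^sub>m p"
    and "spectral_radius (map_mat complex_of_real N) < 1"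
  shows "bij_betw (\<lambda>X. X - N * X * S) (carrier_mat q q) (carrier_mat q q) \<and>
         bij_betw (\<lambda>X. X - N * X * J_mat m2) (carrier_mat q m2) (carrier_mat q m2) \<and>
         bij_betw (\<lambda>X. X - N * X * (D * J_mat m1 * D\<^sup>T)) (carrier_mat q p) (carrier_mat q p)"
  \<comment> \<open>Only \<open>\<rho>(N) < 1\<close> matters about \<open>N\<close>.\<close>
proof (intro conjI)
  note N = assms(12) and sr = assms(18)
  have J: "J_mat m \<in> carrier_mat m m" for m unfolding J_mat_def by auto
  show "bij_betw (\<lambda>X. X - N * X * S) (carrier_mat q q) (carrier_mat q q)"
    using real_stein_bij[OF N assms(14) sr]
      eigenvalue_norm_le_1_if_herm_psd[OF assms(4,5,8,10,14,15)] by blast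
  have "1\<^sub>m m2 * (1\<^sub>m m2)\<^sup>T = (1\<^sub>m m2 :: real mat)" by simp
  moreover have "1\<^sub>m m2 * J_mat m2 * (1\<^sub>m m2)\<^sup>T = J_mat m2" using J[of m2] by simp
  ultimately show "bij_betw (\<lambda>X. X - N * X * J_mat m2) (carrier_mat q m2) (carrier_mat q m2)"
    using real_stein_bij[OF N J sr]
      eigenvalue_J_compression_norm_le_1[OF one_carrier_mat _ assms(3)] by metis
  have "D * J_mat m1 * D\<^sup>T \<in> carrier_mat p p" using assms(16) J by auto
  then show "bij_betw (\<lambda>X. X - N * X * (D * J_mat m1 * D\<^sup>T)) (carrier_mat q p) (carrier_mat q p)"
    using real_stein_bij[OF N _ sr] eigenvalue_J_compression_norm_le_1[OF assms(16,17,2)] by blast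
qed

end
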